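(* Define the relation $\succeq^5$ on $\mathcal{A}$ by $\mathbf{A}\succeq^5\mathbf{B}\iff\nu(\mathbf{A})\le\nu(\mathbf{B})$, where for $\mathbf{A}=[a_{ij}]$ of size $n$, $\nu(\mathbf{A})=\min_{1\le i<j<k\le n}\max\{a_{ij}a_{jk}/a_{ik},\ a_{ik}/(a_{ij}a_{jk})\}$. Then $\succeq^5$ is an inconsistency ranking that satisfies PR, IIP, HTE, SI and RED, but does not satisfy MON.
   Context: A pairwise comparison matrix of size $n$ is a matrix $\mathbf{A}=[a_{ij}]\in\mathbb{R}^{n\times n}$ with all entries positive and $a_{ji}=1/a_{ij}$ for all $i,j$. Let $\mathcal{A}$ denote the set of all pairwise comparison matrices of all sizes $n\ge 3$. For $\mathbf{A}\in\mathcal{A}$ of size $n$ and $3\le m\le n$, a submatrix of $\mathbf{A}$ is a matrix $\mathbf{B}=[b_{ij}]$ of size $m$ with $b_{ij}=a_{\sigma(i)\sigma(j)}$ for some strictly increasing map $\sigma:\{1,\dots,m\}\to\{1,\dots,n\}$. A triad is a pairwise comparison matrix of size $3$; a triad of $\mathbf{A}$ is a submatrix of $\mathbf{A}$ of size $3$ (when $n=3$, $\mathbf{A}$ is its own unique triad). A triad $\mathbf{T}$ is written $\mathbf{T}=(t_1;t_2;t_3)$, meaning $t_{12}=t_1$, $t_{13}=t_2$, $t_{23}=t_3$ (the remaining entries are determined by reciprocity); $\mathbf{T}^\top$ denotes its transpose, i.e. the triad $(1/t_1;1/t_2;1/t_3)$. An inconsistency ranking is a complete and transitive binary relation $\succeq$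 on $\mathcal{A}$; $\mathbf{A}\sim\mathbf{B}$ means $\mathbf{A}\succeq\mathbf{B}$ and $\mathbf{B}\succeq\mathbf{A}$; $\mathbf{A}\preceq\mathbf{B}$ means $\mathbf{B}\succeq\mathbf{A}$. Properties of an inconsistency ranking $\succeq$: (PR) for all $s_2,t_2\ge 1$: $(1;s_2;1)\succeq(1;t_2;1)\iff s_2\le t_2$. (IIP) $\mathbf{T}\sim\mathbf{T}^\top$ for every triad $\mathbf{T}$. (HTE) $(1;t_2;t_3)\sim(1;t_2/t_3;1)$ for all $t_2,t_3>0$. (SI) $(t_1;t_2;t_3)\sim(kt_1;k^2t_2;kt_3)$ for all $t_1,t_2,t_3>0$ and all $k>0$. (MON) $\mathbf{A}\preceq\mathbf{T}$ for every $\mathbf{A}\in\mathcal{A}$ and every triad $\mathbf{T}$ of $\mathbf{A}$. (RED) every $\mathbf{A}\in\mathcal{A}$ has a triad $\mathbf{T}$ with $\mathbf{A}\sim\mathbf{T}$. *)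

theory Defs
  imports Complex_Main
begin

text \<open>A pairwise comparison matrix of size n is represented as a pair (n, a) with
  a :: nat => nat => real, indices 0..n-1 (0-based), and a canonical value 0 outside
  the index range, so that every matrix has a unique representation.\<close>

type_synonym pcm = "nat \<times> (nat \<Rightarrow> nat \<Rightarrow> real)"

definition PCM :: "pcm set" where
  "PCM = {(n, a). n \<ge> 3 \<and>
      (\<forall>i<n. \<forall>j<n. a i j > 0 \<and> a j i = 1 / a i j) \<and>
      (\<forall>i j. (n \<le> i \<or> n \<le> j) \<longrightarrow> a i j = 0)}"

definition submatrix :: "pcm \<Rightarrow> nat \<Rightarrow> (nat \<Rightarrow> nat) \<Rightarrow> pcm" where
  "submatrix A m \<sigma> = (m, \<lambda>i j. if i < m \<and> j < m then snd A (\<sigma> i) (\<sigma> j) else 0)"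

definition is_submatrix :: "pcm \<Rightarrow> pcm \<Rightarrow> bool" where
  "is_submatrix B A \<longleftrightarrow> (\<exists>m \<sigma>. 3 \<le> m \<and> m \<le> fst A \<and>
      (\<forall>i j. i < j \<and> j < m \<longrightarrow> \<sigma> i < \<sigma> j) \<and> (\<forall>i<m. \<sigma> i < fst A) \<and>
      B = submatrix A m \<sigma>)"

text \<open>The triad (t1; t2; t3): t_12 = t1, t_13 = t2, t_23 = t3 (0-based indices).\<close>
definition triad :: "real \<Rightarrow> real \<Rightarrow> real \<Rightarrow> pcm" where
  "triad t1 t2 t3 = (3, \<lambda>i j.
     if i = 0 \<and> j = 1 then t1 else if i = 1 \<and> j = 0 then 1 / t1
     else if i = 0 \<and> j = 2 then t2 else if i = 2 \<and> j = 0 then 1 / t2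
     else if i = 1 \<and> j = 2 then t3 else if i = 2 \<and> j = 1 then 1 / t3
     else if i = j \<and> i < 3 then 1 else 0)"

definition is_triad_of :: "pcm \<Rightarrow> pcm \<Rightarrow> bool" where
  "is_triad_of T A \<longleftrightarrow> is_submatrix T A \<and> fst T = 3"

definition transp_pcm :: "pcm \<Rightarrow> pcm" where
  "transp_pcm A = (fst A, \<lambda>i j. snd A j i)"

text \<open>An inconsistency ranking: complete and transitive relation on PCM.
  (A, B) \<in> R means A \<succeq> B.\<close>
definition inconsistency_ranking :: "pcm rel \<Rightarrow> bool" where
  "inconsistency_ranking R \<longleftrightarrow> R \<subseteq> PCM \<times> PCM \<and>
     (\<forall>A\<in>PCM. \<forall>B\<in>PCM. (A, B) \<in> R \<or> (B, A) \<in> R) \<and>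
     (\<forall>A B C. (A, B) \<in> R \<longrightarrow> (B, C) \<in> R \<longrightarrow> (A, C) \<in> R)"

definition sim :: "pcm rel \<Rightarrow> pcm \<Rightarrow> pcm \<Rightarrow> bool" where
  "sim R A B \<longleftrightarrow> (A, B) \<in> R \<and> (B, A) \<in> R"

definition PR :: "pcm rel \<Rightarrow> bool" where
  "PR R \<longleftrightarrow> (\<forall>s2 t2. s2 \<ge> 1 \<longrightarrow> t2 \<ge> 1 \<longrightarrow>
      ((triad 1 s2 1, triad 1 t2 1) \<in> R \<longleftrightarrow> s2 \<le> t2))"

definition IIP :: "pcm rel \<Rightarrow> bool" where
  "IIP R \<longleftrightarrow> (\<forall>t1 t2 t3. t1 > 0 \<longrightarrow> t2 > 0 \<longrightarrow> t3 > 0 \<longrightarrow>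
      sim R (triad t1 t2 t3) (transp_pcm (triad t1 t2 t3)))"

definition HTE :: "pcm rel \<Rightarrow> bool" where
  "HTE R \<longleftrightarrow> (\<forall>t2 t3. t2 > 0 \<longrightarrow> t3 > 0 \<longrightarrow>
      sim R (triad 1 t2 t3) (triad 1 (t2 / t3) 1))"

definition SI :: "pcm rel \<Rightarrow> bool" where
  "SI R \<longleftrightarrow> (\<forall>t1 t2 t3 k. t1 > 0 \<longrightarrow> t2 > 0 \<longrightarrow> t3 > 0 \<longrightarrow> k > 0 \<longrightarrow>
      sim R (triad t1 t2 t3) (triad (k * t1) (k\<^sup>2 * t2) (k * t3)))"

definition MON :: "pcm rel \<Rightarrow> bool" where
  "MON R \<longleftrightarrow> (\<forall>A\<in>PCM. \<forall>T. is_triad_of T A \<longrightarrow> (T, A) \<in> R)"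

definition RED :: "pcm rel \<Rightarrow> bool" where
  "RED R \<longleftrightarrow> (\<forall>A\<in>PCM. \<exists>T. is_triad_of T A \<and> sim R A T)"

definition nu :: "pcm \<Rightarrow> real" where
  "nu A = Min ((\<lambda>(i, j, k). max (snd A i j * snd A j k / snd A i k)
                                   (snd A i k / (snd A i j * snd A j k)))
               ` {(i, j, k). i < j \<and> j < k \<and> k < fst A})"

definition R5 :: "pcm rel" where
  "R5 = {(A, B). A \<in> PCM \<and> B \<in> PCM \<and> nu A \<le> nu B}"

end

theory Submission
  imports Defs
begin

text \<open>Every triad (t1; t2; t3) has inconsistency max(t1 t3 / t2, t2 / (t1 t3)), an expression
  invariant under transposition, under (t1, t2, t3) \<mapsto> (k t1, k^2 t2, k t3) and under
  t3 \<mapsto> 1, t2 \<mapsto> t2 / t3, and increasing in t2 \<ge> 1 for t1 = t3 = 1. Since nu is a minimum over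
  the finitely many triads of a matrix, it is attained at one of them, which gives RED. MON fails
  because a single consistent triad forces nu = 1 however inconsistent the other triads are.\<close>

definition triple_inconsistency :: "(nat \<Rightarrow> nat \<Rightarrow> real) \<Rightarrow> nat \<Rightarrow> nat \<Rightarrow> nat \<Rightarrow> real" where
  "triple_inconsistency a i j k = max (a i j * a j k / a i k) (a i k / (a i j * a j k))"

definition increasing_triples :: "nat \<Rightarrow> (nat \<times> nat \<times> nat) set" where
  "increasing_triples n = {(i, j, k). i < j \<and> j < k \<and> k < n}"

lemma nu_eq_Min:
  "nu A = Min ((\<lambda>(i, j, k). triple_inconsistency (snd A) i j k) ` increasing_triples (fst A))"
  by (simp add: nu_def triple_inconsistency_def increasing_triples_def)

lemma finite_increasing_triples: "finite (increasing_triples n)"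
  by (rule finite_subset[of _ "{..<n} \<times> {..<n} \<times> {..<n}"]) (auto simp: increasing_triples_def)

lemma increasing_triples_3: "increasing_triples 3 = {(0, 1, 2)}"
  by (auto simp: increasing_triples_def less_Suc_eq numeral_3_eq_3)

lemma nu_le_triple_inconsistency:
  "(i, j, k) \<in> increasing_triples (fst A) \<Longrightarrow> nu A \<le> triple_inconsistency (snd A) i j k"
  unfolding nu_eq_Min
  by (rule Min_le) (auto intro: finite_increasing_triples image_eqI[where x = "(i, j, k)"])

lemma nu_attained:
  assumes "3 \<le> fst A"
  obtains i j k where "(i, j, k) \<in> increasing_triples (fst A)"
    and "nu A = triple_inconsistency (snd A) i j k"
proof -
  have "(0, 1, 2) \<in> increasing_triples (fst A)"
    using assms by (simp add: increasing_triples_def)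
  then have "nu A \<in> (\<lambda>(i, j, k). triple_inconsistency (snd A) i j k) ` increasing_triples (fst A)"
    unfolding nu_eq_Min by (intro Min_in finite_imageI finite_increasing_triples) auto
  then show thesis
    using that by (auto simp del: triple_inconsistency_def)
qed

lemma nu_size_3: "fst A = 3 \<Longrightarrow> nu A = triple_inconsistency (snd A) 0 1 2"
  by (simp add: nu_eq_Min increasing_triples_3)

lemma nu_triad: "nu (triad t1 t2 t3) = max (t1 * t3 / t2) (t2 / (t1 * t3))"
  by (simp add: nu_size_3 triple_inconsistency_def triad_def)

lemma nu_transp_pcm_triad: "nu (transp_pcm (triad t1 t2 t3)) = nu (triad t1 t2 t3)"
  by (simp add: nu_size_3 nu_triad triple_inconsistency_def triad_def transp_pcm_def
      field_simps max.commute)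

lemma triad_in_PCM: "t1 > 0 \<Longrightarrow> t2 > 0 \<Longrightarrow> t3 > 0 \<Longrightarrow> triad t1 t2 t3 \<in> PCM"
  unfolding PCM_def triad_def by (auto simp: less_Suc_eq numeral_3_eq_3)

lemma transp_pcm_in_PCM:
  assumes "A \<in> PCM"
  shows "transp_pcm A \<in> PCM"
proof -
  obtain n a where A: "A = (n, a)" by fastforce
  show ?thesis
    using assms unfolding A PCM_def transp_pcm_def mem_Collect_eq case_prod_conv fst_conv snd_conv
    by blast
qed

lemma is_submatrix_in_PCM:
  assumes "is_submatrix B A" "A \<in> PCM"
  shows "B \<in> PCM"
proof -
  obtain m \<sigma> where m: "3 \<le> m" and \<sigma>: "\<forall>i<m. \<sigma> i < fst A" and B: "B = submatrix A m \<sigma>"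
    using assms(1) unfolding is_submatrix_def by blast
  obtain n a where A: "A = (n, a)" by fastforce
  have entries: "a (\<sigma> i) (\<sigma> j) > 0 \<and> a (\<sigma> j) (\<sigma> i) = 1 / a (\<sigma> i) (\<sigma> j)"
    if "i < m" "j < m" for i j
    using assms(2) \<sigma> that unfolding A PCM_def mem_Collect_eq case_prod_conv fst_conv by blast
  show ?thesis
    unfolding B A PCM_def submatrix_def mem_Collect_eq case_prod_conv fst_conv snd_conv
  proof (intro conjI allI impI)
    show "3 \<le> m" by (rule m)
  next
    fix i j assume "i < m" "j < m"
    then show "(if i < m \<and> j < m then a (\<sigma> i) (\<sigma> j) else 0) > 0"
      and "(if j < m \<and> i < m then a (\<sigma> j) (\<sigma> i) else 0)
             = 1 / (if i < m \<and> j < m then a (\<sigma> i) (\<sigma> j) else 0)"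
      using entries[of i j] by simp_all
  qed auto
qed

lemma is_triad_of_submatrix_triple:
  assumes "(i, j, k) \<in> increasing_triples (fst A)"
  shows "is_triad_of (submatrix A 3 ((!) [i, j, k])) A"
proof -
  have mono: "\<forall>x y. x < y \<and> y < 3 \<longrightarrow> [i, j, k] ! x < [i, j, k] ! y"
    using assms by (auto simp: increasing_triples_def less_Suc_eq numeral_3_eq_3)
  have bound: "\<forall>x<3. [i, j, k] ! x < fst A"
    using assms by (auto simp: increasing_triples_def less_Suc_eq numeral_3_eq_3)
  have "3 \<le> fst A"
    using assms by (simp add: increasing_triples_def)
  then show ?thesis
    unfolding is_triad_of_def is_submatrix_def
    using mono bound by (intro conjI exI[of _ 3] exI[of _ "(!) [i, j, k]"]) (simp_all add: submatrix_def)
qed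

lemma nu_submatrix_triple:
  "nu (submatrix A 3 ((!) [i, j, k])) = triple_inconsistency (snd A) i j k"
  by (simp add: nu_size_3 triple_inconsistency_def submatrix_def)

lemma sim_R5I: "A \<in> PCM \<Longrightarrow> B \<in> PCM \<Longrightarrow> nu A = nu B \<Longrightarrow> sim R5 A B"
  by (simp add: sim_def R5_def)

lemma inconsistency_ranking_R5: "inconsistency_ranking R5"
  unfolding inconsistency_ranking_def R5_def by auto

lemma nu_triad_1_t_1:
  assumes "t \<ge> 1"
  shows "nu (triad 1 t 1) = t"
proof -
  have "1 / t \<le> t"
    using assms order_trans[of "1 / t" 1 t] by simp
  then show ?thesis
    by (simp add: nu_triad max_absorb2)
qed

lemma PR_R5: "PR R5"
  unfolding PR_def R5_def by (auto simp: triad_in_PCM nu_triad_1_t_1)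

lemma IIP_R5: "IIP R5"
  unfolding IIP_def
  by (auto intro!: sim_R5I triad_in_PCM transp_pcm_in_PCM simp: nu_transp_pcm_triad)

lemma HTE_R5: "HTE R5"
  unfolding HTE_def by (auto intro!: sim_R5I triad_in_PCM simp: nu_triad max_def field_simps)

lemma SI_R5: "SI R5"
  unfolding SI_def
  by (auto intro!: sim_R5I triad_in_PCM simp: nu_triad power2_eq_square field_simps)

lemma RED_R5: "RED R5"
  unfolding RED_def
proof
  fix A assume A: "A \<in> PCM"
  then have "3 \<le> fst A" by (auto simp: PCM_def)
  then obtain i j k where ijk: "(i, j, k) \<in> increasing_triples (fst A)"
    and nu_A: "nu A = triple_inconsistency (snd A) i j k"
    by (rule nu_attained)
  let ?T = "submatrix A 3 ((!) [i, j, k])"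
  have triad: "is_triad_of ?T A"
    using ijk by (rule is_triad_of_submatrix_triple)
  then have "?T \<in> PCM"
    using A is_submatrix_in_PCM unfolding is_triad_of_def by blast
  then have "sim R5 A ?T"
    using A nu_A by (intro sim_R5I) (simp_all add: nu_submatrix_triple)
  then show "\<exists>T. is_triad_of T A \<and> sim R5 A T"
    using triad by blast
qed

text \<open>The triad on rows 0, 1, 2 is consistent, the one on rows 0, 1, 3 is not.\<close>
definition mon_counterexample :: pcm where
  "mon_counterexample = (4, \<lambda>i j. if i < 4 \<and> j < 4
     then (if i = 0 \<and> j = 3 then 2 else if i = 3 \<and> j = 0 then 1/2 else 1) else 0)"

lemma not_MON_R5: "\<not> MON R5"
proof
  assume "MON R5"
  moreover have "mon_counterexample \<in> PCM"
    unfolding PCM_def mon_counterexample_def by auto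
  moreover have "(0, 1, 3) \<in> increasing_triples (fst mon_counterexample)"
    by (simp add: increasing_triples_def mon_counterexample_def)
  ultimately have "nu (submatrix mon_counterexample 3 ((!) [0, 1, 3]))
      \<le> nu mon_counterexample"
    unfolding MON_def R5_def using is_triad_of_submatrix_triple by blast
  moreover have "nu (submatrix mon_counterexample 3 ((!) [0, 1, 3])) = 2"
    by (simp add: nu_submatrix_triple triple_inconsistency_def mon_counterexample_def)
  moreover have "nu mon_counterexample \<le> 1"
    using nu_le_triple_inconsistency[of 0 1 2 mon_counterexample]
    by (simp add: increasing_triples_def triple_inconsistency_def mon_counterexample_def)
  ultimately show False by linarith
qed

theorem mainTheorem6:
  shows "inconsistency_ranking R5 \<and> PR R5 \<and> IIP R5 \<and> HTE R5 \<and> SI R5 \<and> RED R5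
         \<and> \<not> MON R5"
  using inconsistency_ranking_R5 PR_R5 IIP_R5 HTE_R5 SI_R5 RED_R5 not_MON_R5 by (intro conjI)

end
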